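(* Let $n\ge1$ and $m\ge2$. Every geodesic in $Y_{n,m}$ ending at the all-zero vertex $0$ has a wall.
   Context: The Yoke graph $Y_{n,m}$ has vertices the tuples $v=(v_0,\dots,v_{m+1})$ with $v_0,v_{m+1}\in\mathbb{Z}_n$, $v_1,\dots,v_m\in\{0,1\}$, $\sum v_i\equiv0\pmod n$; $u\sim v$ iff $u=\overleftarrow{s}_i(v)$ or $u=\overrightarrow{s}_i(v)$ for some $0\le i\le m$, where $\overleftarrow{s}_i(v)$ (left shift) replaces $v_i,v_{i+1}$ by $v_i+1,v_{i+1}-1$ and $\overrightarrow{s}_i(v)$ (right shift) by $v_i-1,v_{i+1}+1$ (buckets mod $n$). For a path $P=(v^0\sim\dots\sim v^d=0)$: an integer $0\le p\le m$ is an inner wall of $P$ if no step of $P$ changes entries $p$ and $p+1$; $-1$ is a (left outer) wall if no step satisfies $v^t=\overleftarrow{s}_0(v^{t-1})$; $m+1$ is a (right outer) wall if no step satisfies $v^t=\overrightarrow{s}_m(v^{t-1})$. A wall is an inner or outer wall. *)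

theory Defs
  imports Main
begin

text \<open>Vertices of the Yoke graph Y_{n,m} are represented as functions nat => int,
  entry i being v_i for i in 0..m+1 and 0 beyond m+1.  Buckets 0 and m+1 take values in
  {0..n-1} (representatives of Z_n).\<close>

definition yoke_vert :: "nat \<Rightarrow> nat \<Rightarrow> (nat \<Rightarrow> int) \<Rightarrow> bool" where
  "yoke_vert n m v \<longleftrightarrow>
     0 \<le> v 0 \<and> v 0 < int n \<and> 0 \<le> v (m+1) \<and> v (m+1) < int n \<and>
     (\<forall>i\<in>{1..m}. v i \<in> {0,1}) \<and> (\<forall>i>m+1. v i = 0) \<and>
     (\<Sum>i\<le>m+1. v i) mod int n = 0"

definition yoke_nrm :: "nat \<Rightarrow> nat \<Rightarrow> (nat \<Rightarrow> int) \<Rightarrow> (nat \<Rightarrow> int)" where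
  "yoke_nrm n m v = (\<lambda>i. if i = 0 \<or> i = m+1 then v i mod int n else v i)"

definition lshift :: "nat \<Rightarrow> nat \<Rightarrow> nat \<Rightarrow> (nat \<Rightarrow> int) \<Rightarrow> (nat \<Rightarrow> int)" where
  "lshift n m i v = yoke_nrm n m (v(i := v i + 1, Suc i := v (Suc i) - 1))"

definition rshift :: "nat \<Rightarrow> nat \<Rightarrow> nat \<Rightarrow> (nat \<Rightarrow> int) \<Rightarrow> (nat \<Rightarrow> int)" where
  "rshift n m i v = yoke_nrm n m (v(i := v i - 1, Suc i := v (Suc i) + 1))"

definition yoke_adj :: "nat \<Rightarrow> nat \<Rightarrow> (nat \<Rightarrow> int) \<Rightarrow> (nat \<Rightarrow> int) \<Rightarrow> bool" where
  "yoke_adj n m v u \<longleftrightarrow> yoke_vert n m v \<and> yoke_vert n m u \<and>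
     (\<exists>i\<le>m. u = lshift n m i v \<or> u = rshift n m i v)"

definition yoke_path :: "nat \<Rightarrow> nat \<Rightarrow> (nat \<Rightarrow> int) list \<Rightarrow> bool" where
  "yoke_path n m ps \<longleftrightarrow> ps \<noteq> [] \<and> (\<forall>v\<in>set ps. yoke_vert n m v) \<and>
     (\<forall>t. Suc t < length ps \<longrightarrow> yoke_adj n m (ps ! t) (ps ! Suc t))"

definition yoke_geodesic :: "nat \<Rightarrow> nat \<Rightarrow> (nat \<Rightarrow> int) list \<Rightarrow> bool" where
  "yoke_geodesic n m ps \<longleftrightarrow> yoke_path n m ps \<and>
     \<not> (\<exists>qs. yoke_path n m qs \<and> hd qs = hd ps \<and> last qs = last ps \<and> length qs < length ps)"

definition inner_wall :: "nat \<Rightarrow> nat \<Rightarrow> (nat \<Rightarrow> int) list \<Rightarrow> nat \<Rightarrow> bool" where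
  "inner_wall n m ps p \<longleftrightarrow> p \<le> m \<and>
     (\<forall>t. Suc t < length ps \<longrightarrow>
        ps ! Suc t \<noteq> lshift n m p (ps ! t) \<and> ps ! Suc t \<noteq> rshift n m p (ps ! t))"

definition left_outer_wall :: "nat \<Rightarrow> nat \<Rightarrow> (nat \<Rightarrow> int) list \<Rightarrow> bool" where
  "left_outer_wall n m ps \<longleftrightarrow>
     (\<forall>t. Suc t < length ps \<longrightarrow> ps ! Suc t \<noteq> lshift n m 0 (ps ! t))"

definition right_outer_wall :: "nat \<Rightarrow> nat \<Rightarrow> (nat \<Rightarrow> int) list \<Rightarrow> bool" where
  "right_outer_wall n m ps \<longleftrightarrow>
     (\<forall>t. Suc t < length ps \<longrightarrow> ps ! Suc t \<noteq> rshift n m m (ps ! t))"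

definition has_wall :: "nat \<Rightarrow> nat \<Rightarrow> (nat \<Rightarrow> int) list \<Rightarrow> bool" where
  "has_wall n m ps \<longleftrightarrow> (\<exists>p. inner_wall n m ps p) \<or> left_outer_wall n m ps \<or> right_outer_wall n m ps"

end

theory Submission
  imports Defs
begin

text \<open>Lift bucket v_0 to an integer c congruent to v_0 mod n and put G_q = c + v_1 + ... + v_q
  for q = 0..m.  A shift at position p changes G_p by one and leaves every other G_q unchanged
  (for p = 0 the lift moves along), so the potential sum_q abs G_q changes by at most one per step;
  conversely a suitable greedy shift lowers a nonzero potential by exactly one.  If both outer shifts occur then G_0 < 0 < G_m, and as G grows in
  steps of 0 or 1, some G_p vanishes, giving an inner wall.\<close>

lemma yoke_vert_inner: "yoke_vert n m v \<Longrightarrow> 1 \<le> i \<Longrightarrow> i \<le> m \<Longrightarrow> v i = 0 \<or> v i = 1"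
  by (auto simp: yoke_vert_def)

definition yoke_shift :: "nat \<Rightarrow> nat \<Rightarrow> nat \<Rightarrow> int \<Rightarrow> (nat \<Rightarrow> int) \<Rightarrow> nat \<Rightarrow> int" where
  "yoke_shift n m p s v = yoke_nrm n m (v(p := v p - s, Suc p := v (Suc p) + s))"

lemma lshift_eq_yoke_shift: "lshift n m p v = yoke_shift n m p (-1) v"
  by (simp add: lshift_def yoke_shift_def)

lemma rshift_eq_yoke_shift: "rshift n m p v = yoke_shift n m p 1 v"
  by (simp add: rshift_def yoke_shift_def)

lemma yoke_shift_inner:
  "1 \<le> i \<Longrightarrow> i \<le> m \<Longrightarrow>
     yoke_shift n m p s v i = v i - (if i = p then s else 0) + (if i = Suc p then s else 0)"
  by (auto simp: yoke_shift_def yoke_nrm_def)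

lemma yoke_shift_bucket_0:
  "p \<le> m \<Longrightarrow> yoke_shift n m p s v 0 = (v 0 - (if p = 0 then s else 0)) mod int n"
  by (auto simp: yoke_shift_def yoke_nrm_def)

lemma dvd_lift_yoke_shift_iff:
  assumes "p \<le> m"
  shows "int n dvd (c - (if p = 0 then s else 0)) - yoke_shift n m p s v 0 \<longleftrightarrow> int n dvd c - v 0"
proof -
  have "int n dvd (c - (if p = 0 then s else 0)) - yoke_shift n m p s v 0
      \<longleftrightarrow> int n dvd (c - (if p = 0 then s else 0)) - (v 0 - (if p = 0 then s else 0))"
    unfolding yoke_shift_bucket_0[OF assms] by (metis mod_diff_right_eq mod_eq_0_iff_dvd)
  then show ?thesis by simp
qed

text \<open>The bound on m matters: for m = n = 1 the right shift at 0 and the left shift at 1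
  give the same vertex.\<close>

lemma yoke_shift_inj:
  assumes "2 \<le> m" "p \<le> m" "p' \<le> m" "s \<in> {1, -1}" "s' \<in> {1, -1}"
    and eq: "yoke_shift n m p s v = yoke_shift n m p' s' v"
  shows "p = p' \<and> s = s'"
proof -
  have inner: "(if i = p then s else 0) - (if i = Suc p then s else 0)
      = (if i = p' then s' else 0) - (if i = Suc p' then s' else 0)" if "1 \<le> i" "i \<le> m" for i
    using yoke_shift_inner[OF that, of n p s v] yoke_shift_inner[OF that, of n p' s' v] eq by simp
  show ?thesis
    using inner[of 1] inner[of 2] inner[of p] inner[of p'] inner[of "Suc p"] assms(1-5)
    by (cases "p = 0"; cases "p' = 0"; cases "p = 1"; cases "p' = 1"; auto split: if_splits)
qed

lemma sum_yoke_nrm_mod: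
  "(\<Sum>i\<le>m+1. yoke_nrm n m u i) mod int n = (\<Sum>i\<le>m+1. u i) mod int n"
proof -
  have "yoke_nrm n m u i mod int n = u i mod int n" for i
    by (simp add: yoke_nrm_def)
  then show ?thesis
    by (metis (no_types, lifting) mod_sum_eq sum.cong)
qed

lemma yoke_vert_yoke_shift:
  assumes v: "yoke_vert n m v" and p: "p \<le> m"
    and left: "1 \<le> p \<Longrightarrow> v p - s \<in> {0, 1}" and right: "p < m \<Longrightarrow> v (Suc p) + s \<in> {0, 1}"
  shows "yoke_vert n m (yoke_shift n m p s v)"
proof -
  define u where "u = v(p := v p - s, Suc p := v (Suc p) + s)"
  have u: "u i = v i - (if i = p then s else 0) + (if i = Suc p then s else 0)" for i
    by (auto simp: u_def)
  have "(\<Sum>i\<le>m+1. u i) = (\<Sum>i\<le>m+1. v i)"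
    using p by (simp add: u sum.distrib sum_subtractf)
  then have "(\<Sum>i\<le>m+1. yoke_shift n m p s v i) mod int n = 0"
    using v sum_yoke_nrm_mod[where n = n and m = m and u = u] by (simp add: yoke_shift_def u_def yoke_vert_def)
  moreover have "n > 0"
    using v by (simp add: yoke_vert_def)
  moreover have "yoke_shift n m p s v i \<in> {0, 1}" if "i \<in> {1..m}" for i
    using that v left right yoke_shift_inner[of i m n p s v] by (auto simp: yoke_vert_def)
  ultimately show ?thesis
    using v p by (auto simp: yoke_vert_def yoke_shift_def yoke_nrm_def)
qed

definition cumsum :: "int \<Rightarrow> (nat \<Rightarrow> int) \<Rightarrow> nat \<Rightarrow> int" where
  "cumsum c v q = c + (\<Sum>i = 1..q. v i)"

definition yoke_potential :: "nat \<Rightarrow> int \<Rightarrow> (nat \<Rightarrow> int) \<Rightarrow> int" where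
  "yoke_potential m c v = (\<Sum>q\<le>m. \<bar>cumsum c v q\<bar>)"

lemma cumsum_0 [simp]: "cumsum c v 0 = c"
  by (simp add: cumsum_def)

lemma cumsum_Suc: "cumsum c v (Suc q) = cumsum c v q + v (Suc q)"
  by (simp add: cumsum_def)

lemma cumsum_yoke_shift:
  assumes "p \<le> m" "q \<le> m"
  shows "cumsum (c - (if p = 0 then s else 0)) (yoke_shift n m p s v) q
    = cumsum c v q - (if q = p then s else 0)"
  using assms(2)
proof (induction q)
  case (Suc q)
  then show ?case
    using assms(1) yoke_shift_inner[of "Suc q" m n p s v] by (auto simp: cumsum_Suc)
qed simp

lemma yoke_potential_yoke_shift:
  assumes "p \<le> m"
  shows "yoke_potential m (c - (if p = 0 then s else 0)) (yoke_shift n m p s v)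
    = yoke_potential m c v - \<bar>cumsum c v p\<bar> + \<bar>cumsum c v p - s\<bar>"
proof -
  let ?c' = "c - (if p = 0 then s else 0)" and ?w = "yoke_shift n m p s v"
  have "(\<Sum>q\<in>{..m} - {p}. \<bar>cumsum ?c' ?w q\<bar>) = (\<Sum>q\<in>{..m} - {p}. \<bar>cumsum c v q\<bar>)"
    by (rule sum.cong) (simp_all add: cumsum_yoke_shift[OF assms])
  then show ?thesis
    using assms cumsum_yoke_shift[OF assms assms, of c s n v]
    by (simp add: yoke_potential_def sum.remove[of "{..m}" p])
qed

lemma yoke_potential_nonneg: "0 \<le> yoke_potential m c v"
  by (simp add: yoke_potential_def sum_nonneg)

lemma yoke_potential_zero [simp]: "yoke_potential m 0 (\<lambda>_. 0) = 0"
  by (simp add: yoke_potential_def cumsum_def)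

lemma yoke_potential_eq_0_imp_zero:
  assumes v: "yoke_vert n m v" and lift: "int n dvd c - v 0" and pot: "yoke_potential m c v = 0"
  shows "v = (\<lambda>_. 0)"
proof -
  have zero: "cumsum c v q = 0" if "q \<le> m" for q
    using pot that by (simp add: yoke_potential_def sum_nonneg_eq_0_iff)
  have inner: "v i = 0" if "1 \<le> i" "i \<le> m" for i
    using that zero[of i] zero[of "i - 1"] cumsum_Suc[of c v "i - 1"] by simp
  have small: "x = 0" if "int n dvd x" "0 \<le> x" "x < int n" for x
    using that by (metis dvd_imp_mod_0 mod_pos_pos_trivial)
  have v0: "v 0 = 0"
    using lift zero[of 0] v small[of "v 0"] by (simp add: yoke_vert_def)
  have "(\<Sum>i\<le>m. v i) = 0"
    using inner v0 by (intro sum.neutral) (metis atMost_iff less_one not_le)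
  then have vm: "v (m+1) = 0"
    using v small[of "v (m+1)"] by (simp add: yoke_vert_def dvd_eq_mod_eq_0)
  show ?thesis
  proof
    fix i
    consider "i = 0" | "1 \<le> i \<and> i \<le> m" | "i = m+1" | "i > m+1"
      by linarith
    then show "v i = 0"
      using v v0 inner vm by cases (auto simp: yoke_vert_def)
  qed
qed

lemma yoke_path_Cons:
  "yoke_path n m (v # qs) \<longleftrightarrow>
     yoke_vert n m v \<and> (qs = [] \<or> yoke_path n m qs \<and> yoke_adj n m v (hd qs))"
proof -
  have split_first: "(\<forall>t::nat. P t) \<longleftrightarrow> P 0 \<and> (\<forall>t. P (Suc t))" for P
    by (metis not0_implies_Suc)
  show ?thesis
    unfolding yoke_path_def split_first[where P = "\<lambda>t. Suc t < length (v # qs) \<longrightarrow> _ t"]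
    by (cases qs) auto
qed

lemma exists_right_shift:
  assumes v: "yoke_vert n m v" and q: "q \<le> m" "1 \<le> cumsum c v q"
  shows "\<exists>p\<le>m. 1 \<le> cumsum c v p \<and> yoke_vert n m (yoke_shift n m p 1 v)"
proof -
  define A where "A = {a. a \<le> m \<and> 1 \<le> cumsum c v a \<and> (a = 0 \<or> v a = 1)}"
  have "\<exists>a\<le>q. a \<in> A"
    using q
  proof (induction q)
    case 0
    then show ?case
      by (auto simp: A_def)
  next
    case (Suc q)
    show ?case
    proof (cases "v (Suc q) = 1")
      case True
      then show ?thesis
        using Suc.prems by (auto simp: A_def)
    next
      case False
      then have "1 \<le> cumsum c v q"
        using Suc.prems yoke_vert_inner[OF v, of "Suc q"] by (simp add: cumsum_Suc)
      then show ?thesis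
        using Suc by (meson Suc_leD le_Suc_eq)
    qed
  qed
  moreover have fin: "finite A"
    by (rule finite_subset[of _ "{..m}"]) (auto simp: A_def)
  ultimately have p: "Max A \<in> A"
    by (metis Max_in empty_iff)
  have "Suc (Max A) \<notin> A"
    using Max_ge[OF fin, of "Suc (Max A)"] by linarith
  then have "Max A < m \<Longrightarrow> v (Suc (Max A)) = 0"
    using p yoke_vert_inner[OF v, of "Suc (Max A)"] by (auto simp: A_def cumsum_Suc)
  with p show ?thesis
    by (intro exI[of _ "Max A"]) (auto simp: A_def intro!: yoke_vert_yoke_shift[OF v])
qed

lemma exists_left_shift:
  assumes v: "yoke_vert n m v" and q: "q \<le> m" "cumsum c v q \<le> -1"
  shows "\<exists>p\<le>m. cumsum c v p \<le> -1 \<and> yoke_vert n m (yoke_shift n m p (-1) v)"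
proof -
  define B where "B = {b. b \<le> m \<and> cumsum c v b \<le> -1 \<and> (b = m \<or> v (Suc b) = 1)}"
  have "\<exists>b\<ge>q. b \<in> B"
    using q
  proof (induction q rule: inc_induct)
    case base
    then show ?case
      by (auto simp: B_def)
  next
    case (step k)
    show ?case
    proof (cases "v (Suc k) = 1")
      case True
      then show ?thesis
        using step by (auto simp: B_def)
    next
      case False
      then have "cumsum c v (Suc k) \<le> -1"
        using step yoke_vert_inner[OF v, of "Suc k"] by (simp add: cumsum_Suc)
      then show ?thesis
        using step.IH by (meson Suc_leD)
    qed
  qed
  moreover have fin: "finite B"
    by (rule finite_subset[of _ "{..m}"]) (auto simp: B_def)
  ultimately have p: "Min B \<in> B"
    by (metis Min_in empty_iff)
  have "1 \<le> Min B \<Longrightarrow> Min B - 1 \<notin> B"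
    using Min_le[OF fin, of "Min B - 1"] by linarith
  then have "1 \<le> Min B \<Longrightarrow> v (Min B) = 0"
    using p yoke_vert_inner[OF v, of "Min B"] cumsum_Suc[of c v "Min B - 1"]
    by (auto simp: B_def)
  with p show ?thesis
    by (intro exI[of _ "Min B"]) (auto simp: B_def intro!: yoke_vert_yoke_shift[OF v])
qed

lemma exists_yoke_shift_decreasing_potential:
  assumes v: "yoke_vert n m v" and pot: "yoke_potential m c v \<noteq> 0"
  shows "\<exists>p s. p \<le> m \<and> s \<in> {1, -1} \<and> 1 \<le> s * cumsum c v p \<and>
    yoke_vert n m (yoke_shift n m p s v)"
proof -
  have "\<exists>q\<le>m. cumsum c v q \<noteq> 0"
  proof (rule ccontr)
    assume "\<not> ?thesis"
    then have "yoke_potential m c v = 0"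
      by (simp add: yoke_potential_def)
    with pot show False ..
  qed
  then obtain q where q: "q \<le> m" "cumsum c v q \<noteq> 0"
    by blast
  then consider "1 \<le> cumsum c v q" | "cumsum c v q \<le> -1"
    by linarith
  then show ?thesis
  proof cases
    case 1
    then show ?thesis
      using exists_right_shift[OF v q(1)] by force
  next
    case 2
    then show ?thesis
      using exists_left_shift[OF v q(1)] by force
  qed
qed

lemma exists_yoke_path_to_zero:
  assumes "yoke_vert n m v" "int n dvd c - v 0"
  shows "\<exists>qs. yoke_path n m qs \<and> hd qs = v \<and> last qs = (\<lambda>_. 0) \<and>
    int (length qs) = yoke_potential m c v + 1"
  using assms
proof (induction "nat (yoke_potential m c v)" arbitrary: v c)
  case 0
  then have pot: "yoke_potential m c v = 0"
    using yoke_potential_nonneg[of m c v] by linarith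
  then have "v = (\<lambda>_. 0)"
    using 0 yoke_potential_eq_0_imp_zero by blast
  then show ?case
    using 0 pot by (intro exI[of _ "[v]"]) (simp add: yoke_path_def)
next
  case (Suc k)
  then obtain p s where p: "p \<le> m" "s \<in> {1, -1}" "1 \<le> s * cumsum c v p"
    and w: "yoke_vert n m (yoke_shift n m p s v)"
    using exists_yoke_shift_decreasing_potential[of n m v c] by force
  let ?c' = "c - (if p = 0 then s else 0)" and ?w = "yoke_shift n m p s v"
  have pot: "yoke_potential m ?c' ?w = yoke_potential m c v - 1"
    using yoke_potential_yoke_shift[OF p(1)] p(2,3) by auto
  have lift: "int n dvd ?c' - ?w 0"
    using Suc.prems(2) dvd_lift_yoke_shift_iff[OF p(1)] by blast
  have "k = nat (yoke_potential m ?c' ?w)"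
    using pot Suc.hyps(2) by linarith
  then obtain qs where qs: "yoke_path n m qs" "hd qs = ?w" "last qs = (\<lambda>_. 0)"
      "int (length qs) = yoke_potential m c v"
    using Suc.hyps(1) w lift pot by force
  have "yoke_adj n m v ?w"
    using Suc.prems(1) w p(1,2) by (auto simp: yoke_adj_def lshift_eq_yoke_shift rshift_eq_yoke_shift)
  then show ?case
    using qs Suc.prems(1) yoke_path_Cons[of n m v qs] by (intro exI[of _ "v # qs"]) (auto simp: yoke_path_def)
qed

definition steps_follow_cumsum_sign :: "nat \<Rightarrow> nat \<Rightarrow> int \<Rightarrow> (nat \<Rightarrow> int) list \<Rightarrow> bool" where
  "steps_follow_cumsum_sign n m c ps \<longleftrightarrow>
     (\<forall>t p s. Suc t < length ps \<longrightarrow> p \<le> m \<longrightarrow> s \<in> {1, -1} \<longrightarrow>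
        ps ! Suc t = yoke_shift n m p s (ps ! t) \<longrightarrow> 1 \<le> s * cumsum c (hd ps) p)"

lemma steps_follow_cumsum_signD:
  "steps_follow_cumsum_sign n m c ps \<Longrightarrow> Suc t < length ps \<Longrightarrow> p \<le> m \<Longrightarrow> s \<in> {1, -1} \<Longrightarrow>
    ps ! Suc t = yoke_shift n m p s (ps ! t) \<Longrightarrow> 1 \<le> s * cumsum c (hd ps) p"
  by (auto simp: steps_follow_cumsum_sign_def)

lemma steps_follow_cumsum_sign_Cons:
  assumes m: "2 \<le> m" and p: "p \<le> m" "s \<in> {1, -1}" and sign: "1 \<le> s * cumsum c v p"
    and rest: "rest \<noteq> []" "hd rest = yoke_shift n m p s v"
    and steps: "steps_follow_cumsum_sign n m (c - (if p = 0 then s else 0)) rest"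
  shows "steps_follow_cumsum_sign n m c (v # rest)"
  unfolding steps_follow_cumsum_sign_def
proof (intro allI impI)
  fix t p' s'
  assume t: "Suc t < length (v # rest)" and p': "p' \<le> m" and s': "s' \<in> {1, -1}"
    and step: "(v # rest) ! Suc t = yoke_shift n m p' s' ((v # rest) ! t)"
  show "1 \<le> s' * cumsum c (hd (v # rest)) p'"
  proof (cases t)
    case 0
    then have "yoke_shift n m p s v = yoke_shift n m p' s' v"
      using step rest by (simp add: hd_conv_nth)
    then have "p = p' \<and> s = s'"
      using yoke_shift_inj[OF m p(1) p' p(2) s'] by blast
    then show ?thesis
      using sign by simp
  next
    case (Suc t')
    then have "1 \<le> s' * cumsum (c - (if p = 0 then s else 0)) (hd rest) p'"
      using steps_follow_cumsum_signD[OF steps _ p' s'] t step by simp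
    then have "1 \<le> s' * (cumsum c v p' - (if p' = p then s else 0))"
      using rest(2) cumsum_yoke_shift[OF p(1) p'] by simp
    then show ?thesis
      using sign p(2) s' by (auto split: if_splits)
  qed
qed

lemma yoke_path_to_zero_potential:
  assumes m: "2 \<le> m" and "yoke_path n m ps" "last ps = (\<lambda>_. 0)"
  shows "\<exists>c. int n dvd c - hd ps 0 \<and> yoke_potential m c (hd ps) \<le> int (length ps) - 1 \<and>
    (yoke_potential m c (hd ps) = int (length ps) - 1 \<longrightarrow> steps_follow_cumsum_sign n m c ps)"
  using assms(2,3)
proof (induction ps)
  case Nil
  then show ?case
    by (simp add: yoke_path_def)
next
  case (Cons v rest)
  show ?case
  proof (cases "rest = []")
    case True
    then show ?thesis
      using Cons.prems by (intro exI[of _ 0]) (simp add: steps_follow_cumsum_sign_def)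
  next
    case False
    then have path: "yoke_path n m rest" "yoke_adj n m v (hd rest)"
      using Cons.prems(1) yoke_path_Cons by auto
    obtain c' where c': "int n dvd c' - hd rest 0"
      "yoke_potential m c' (hd rest) \<le> int (length rest) - 1"
      "yoke_potential m c' (hd rest) = int (length rest) - 1 \<Longrightarrow> steps_follow_cumsum_sign n m c' rest"
      using Cons.IH path(1) Cons.prems(2) False by auto
    obtain p s where p: "p \<le> m" "s \<in> {1, -1}" and w: "hd rest = yoke_shift n m p s v"
      using path(2) by (auto simp: yoke_adj_def lshift_eq_yoke_shift rshift_eq_yoke_shift)
    define c where "c = c' + (if p = 0 then s else 0)"
    have c'_eq: "c' = c - (if p = 0 then s else 0)"
      by (simp add: c_def)
    have pot: "yoke_potential m c' (hd rest)
        = yoke_potential m c v - \<bar>cumsum c v p\<bar> + \<bar>cumsum c v p - s\<bar>"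
      unfolding c'_eq w by (rule yoke_potential_yoke_shift[OF p(1)])
    have lift: "int n dvd c - v 0"
      using c'(1) dvd_lift_yoke_shift_iff[OF p(1)] unfolding c'_eq w by blast
    have "steps_follow_cumsum_sign n m c (v # rest)"
      if "yoke_potential m c v = int (length (v # rest)) - 1"
    proof (rule steps_follow_cumsum_sign_Cons[OF m p _ False w])
      show "1 \<le> s * cumsum c v p" "steps_follow_cumsum_sign n m (c - (if p = 0 then s else 0)) rest"
        using that pot c' p(2) unfolding c'_eq by auto
    qed
    then show ?thesis
      using lift pot c'(2) p(2) by (intro exI[of _ c]) auto
  qed
qed

lemma yoke_geodesic_to_zero_steps:
  assumes m: "2 \<le> m" and geo: "yoke_geodesic n m ps" and last: "last ps = (\<lambda>_. 0)"
  shows "\<exists>c. steps_follow_cumsum_sign n m c ps"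
proof -
  have path: "yoke_path n m ps"
    using geo by (simp add: yoke_geodesic_def)
  then obtain c where lift: "int n dvd c - hd ps 0"
    and bound: "yoke_potential m c (hd ps) \<le> int (length ps) - 1"
    and tight: "yoke_potential m c (hd ps) = int (length ps) - 1 \<Longrightarrow> steps_follow_cumsum_sign n m c ps"
    using yoke_path_to_zero_potential[OF m path last] by blast
  have "yoke_vert n m (hd ps)"
    using path by (simp add: yoke_path_def)
  then obtain qs where "yoke_path n m qs" "hd qs = hd ps" "last qs = last ps"
      "int (length qs) = yoke_potential m c (hd ps) + 1"
    using exists_yoke_path_to_zero lift last by metis
  then have "int (length ps) \<le> yoke_potential m c (hd ps) + 1"
    using geo by (auto simp: yoke_geodesic_def)
  then show ?thesis
    using bound tight by auto
qed

lemma cumsum_zero_crossing: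
  assumes v: "yoke_vert n m v" and "c < 0" and "q \<le> m" "0 \<le> cumsum c v q"
  shows "\<exists>p\<le>q. cumsum c v p = 0"
  using assms(3,4)
proof (induction q)
  case 0
  then show ?case
    using \<open>c < 0\<close> by simp
next
  case (Suc q)
  show ?case
  proof (cases "0 \<le> cumsum c v q")
    case True
    then show ?thesis
      using Suc by (meson Suc_leD le_Suc_eq)
  next
    case False
    then have "cumsum c v (Suc q) = 0"
      using Suc.prems yoke_vert_inner[OF v, of "Suc q"] by (auto simp: cumsum_Suc)
    then show ?thesis
      by blast
  qed
qed

theorem lemma4p7:
  fixes n m :: nat and ps :: "(nat \<Rightarrow> int) list"
  assumes "n \<ge> 1" and "m \<ge> 2"
    and "yoke_geodesic n m ps" and "last ps = (\<lambda>_. 0)"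
  shows "has_wall n m ps"
proof (rule ccontr)
  assume no_wall: "\<not> has_wall n m ps"
  obtain c where steps: "steps_follow_cumsum_sign n m c ps"
    using yoke_geodesic_to_zero_steps assms(2-4) by blast
  have v: "yoke_vert n m (hd ps)"
    using assms(3) by (simp add: yoke_geodesic_def yoke_path_def)
  obtain t where t: "Suc t < length ps" "ps ! Suc t = yoke_shift n m 0 (-1) (ps ! t)"
    using no_wall by (auto simp: has_wall_def left_outer_wall_def lshift_eq_yoke_shift)
  have neg: "c < 0"
    using steps_follow_cumsum_signD[OF steps t(1) _ _ t(2)] by simp
  obtain t' where t': "Suc t' < length ps" "ps ! Suc t' = yoke_shift n m m 1 (ps ! t')"
    using no_wall by (auto simp: has_wall_def right_outer_wall_def rshift_eq_yoke_shift)
  have pos: "0 \<le> cumsum c (hd ps) m"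
    using steps_follow_cumsum_signD[OF steps t'(1) _ _ t'(2)] by simp
  obtain p where p: "p \<le> m" "cumsum c (hd ps) p = 0"
    using cumsum_zero_crossing[OF v neg order.refl pos] by blast
  have "inner_wall n m ps p"
    unfolding inner_wall_def lshift_eq_yoke_shift rshift_eq_yoke_shift
  proof (intro conjI allI impI p(1))
    fix t
    assume "Suc t < length ps"
    from steps_follow_cumsum_signD[OF steps this p(1)] p(2)
    show "ps ! Suc t \<noteq> yoke_shift n m p (-1) (ps ! t)" "ps ! Suc t \<noteq> yoke_shift n m p 1 (ps ! t)"
      by auto
  qed
  with no_wall show False
    by (simp add: has_wall_def)
qed

end
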